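(* Let $R$ be any unital ring and $A\in GL_n(R)$. If some entry of $A$ is an idempotent, then $A$ can be reduced by a finite sequence of elementary row and column operations to a matrix of the form $\begin{bmatrix}1&0\\0&A'\end{bmatrix}$, i.e. with $1,1$ entry equal to $1$ and all other entries of the first row and first column equal to $0$.
   Context: An elementary row (resp. column) operation adds a left (resp. right) multiple by an element of $R$ of one row (resp. column) to a different row (resp. column); equivalently, multiplication on the left (resp. right) by a transvection $I+re_{ij}$ with $i\neq j$, $r\in R$. *)

theory Defs
  imports "Jordan_Normal_Form.Matrix"
begin

definition transvection :: "nat \<Rightarrow> nat \<Rightarrow> nat \<Rightarrow> 'a::ring_1 \<Rightarrow> 'a mat" where
  "transvection n i j r = mat n n (\<lambda>(k,l). if k = l then 1 else if k = i \<and> l = j then r else 0)"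

inductive elem_reduces :: "nat \<Rightarrow> 'a::ring_1 mat \<Rightarrow> 'a mat \<Rightarrow> bool" for n where
  refl: "elem_reduces n A A"
| row: "elem_reduces n A B \<Longrightarrow> i < n \<Longrightarrow> j < n \<Longrightarrow> i \<noteq> j \<Longrightarrow>
          elem_reduces n A (transvection n i j r * B)"
| col: "elem_reduces n A B \<Longrightarrow> i < n \<Longrightarrow> j < n \<Longrightarrow> i \<noteq> j \<Longrightarrow>
          elem_reduces n A (B * transvection n i j r)"

end

(* Let e = A(i,j) be idempotent. Subtracting A(k,j) times row i from every other row k makes
   e annihilate the rest of column j from the right. For a left inverse Y of the new matrix C,
   right-multiplying the (j,j) entry of Y * C = 1 by e then gives Y(j,i) e = e, so the other
   rows of C weighted by Y(j,-) sum to 1 - e in column j. Adding them to row i creates an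
   entry 1, which transvections move to position (0,0) and use to clear its row and column. *)
theory Submission
  imports Defs
begin

lemma transvection_carrier [simp]: "transvection n i j r \<in> carrier_mat n n"
  by (simp add: transvection_def)

lemma index_transvection_mult:
  fixes M :: "'a::ring_1 mat"
  assumes "M \<in> carrier_mat n n" "i < n" "j < n" "i \<noteq> j" "k < n" "m < n"
  shows "(transvection n i j r * M) $$ (k, m) = M $$ (k, m) + (if k = i then r * M $$ (j, m) else 0)"
proof -
  have "(transvection n i j r * M) $$ (k, m) = (\<Sum>p\<in>{0..<n}. transvection n i j r $$ (k, p) * M $$ (p, m))"
    using assms by (simp add: scalar_prod_def transvection_def)
  also have "\<dots> = (\<Sum>p\<in>{0..<n}. (if p = k then M $$ (k, m) else 0)
                    + (if p = j then (if k = i then r * M $$ (j, m) else 0) else 0))"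
    by (rule sum.cong) (use assms in \<open>auto simp: transvection_def\<close>)
  also have "\<dots> = M $$ (k, m) + (if k = i then r * M $$ (j, m) else 0)"
    using assms by (simp add: sum.distrib)
  finally show ?thesis .
qed

lemma index_mult_transvection:
  fixes M :: "'a::ring_1 mat"
  assumes "M \<in> carrier_mat n n" "i < n" "j < n" "i \<noteq> j" "k < n" "m < n"
  shows "(M * transvection n i j r) $$ (k, m) = M $$ (k, m) + (if m = j then M $$ (k, i) * r else 0)"
proof -
  have "(M * transvection n i j r) $$ (k, m) = (\<Sum>p\<in>{0..<n}. M $$ (k, p) * transvection n i j r $$ (p, m))"
    using assms by (simp add: scalar_prod_def transvection_def)
  also have "\<dots> = (\<Sum>p\<in>{0..<n}. (if p = m then M $$ (k, m) else 0)
                    + (if p = i then (if m = j then M $$ (k, i) * r else 0) else 0))"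
    by (rule sum.cong) (use assms in \<open>auto simp: transvection_def\<close>)
  also have "\<dots> = M $$ (k, m) + (if m = j then M $$ (k, i) * r else 0)"
    using assms by (simp add: sum.distrib)
  finally show ?thesis .
qed

lemma transvection_uminus_mult:
  assumes "i < n" "j < n" "i \<noteq> j"
  shows "transvection n i j (- r) * transvection n i j (r::'a::ring_1) = 1\<^sub>m n"
proof (rule eq_matI)
  fix k m assume "k < dim_row (1\<^sub>m n)" "m < dim_col (1\<^sub>m n)"
  then show "(transvection n i j (- r) * transvection n i j r) $$ (k, m) = 1\<^sub>m n $$ (k, m)"
    using assms by (subst index_transvection_mult) (auto simp: transvection_def)
qed (auto simp: transvection_def)

lemma elem_reduces_carrier:
  "elem_reduces n A B \<Longrightarrow> A \<in> carrier_mat n n \<Longrightarrow> B \<in> carrier_mat n n"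
  by (induction rule: elem_reduces.induct) (auto intro!: mult_carrier_mat[of _ n n _ n])

lemma elem_reduces_trans:
  "elem_reduces n B C \<Longrightarrow> elem_reduces n A B \<Longrightarrow> elem_reduces n A C"
  by (induction rule: elem_reduces.induct) (auto intro: elem_reduces.row elem_reduces.col)

lemma elem_reduces_left_invertible:
  assumes "elem_reduces n A B" "A \<in> carrier_mat n n" "X \<in> carrier_mat n n" "X * A = 1\<^sub>m n"
  shows "\<exists>Y\<in>carrier_mat n n. Y * B = 1\<^sub>m n"
  using assms
proof (induction rule: elem_reduces.induct)
  case refl
  then show ?case by auto
next
  case (row A B i j r)
  then obtain Y where Y: "Y \<in> carrier_mat n n" "Y * B = 1\<^sub>m n" by auto
  have B: "B \<in> carrier_mat n n" using row elem_reduces_carrier by auto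
  have "(Y * transvection n i j (- r)) * (transvection n i j r * B)
      = Y * (transvection n i j (- r) * (transvection n i j r * B))"
    using Y B by (intro assoc_mult_mat[of _ n n _ n _ n]) (auto intro!: mult_carrier_mat)
  also have "\<dots> = Y * ((transvection n i j (- r) * transvection n i j r) * B)"
    using B by (subst assoc_mult_mat[of _ n n _ n _ n]) (auto intro!: mult_carrier_mat)
  also have "\<dots> = 1\<^sub>m n"
    using Y B by (simp add: transvection_uminus_mult row.hyps)
  finally show ?case using Y by (intro bexI[of _ "Y * transvection n i j (- r)"]) (auto intro!: mult_carrier_mat)
next
  case (col A B i j r)
  then obtain Y where Y: "Y \<in> carrier_mat n n" "Y * B = 1\<^sub>m n" by auto
  have B: "B \<in> carrier_mat n n" using col elem_reduces_carrier by auto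
  have "(transvection n i j (- r) * Y) * (B * transvection n i j r)
      = transvection n i j (- r) * (Y * (B * transvection n i j r))"
    using Y B by (intro assoc_mult_mat[of _ n n _ n _ n]) (auto intro!: mult_carrier_mat)
  also have "\<dots> = transvection n i j (- r) * ((Y * B) * transvection n i j r)"
    using Y B by (subst assoc_mult_mat[of _ n n _ n _ n]) (auto intro!: mult_carrier_mat)
  also have "\<dots> = 1\<^sub>m n"
    using Y by (simp add: left_mult_one_mat[of _ n n] transvection_uminus_mult col.hyps)
  finally show ?case using Y by (intro bexI[of _ "transvection n i j (- r) * Y"]) (auto intro!: mult_carrier_mat)
qed

lemma elem_reduces_add_rows_to_row:
  fixes B :: "'a::ring_1 mat"
  assumes "B \<in> carrier_mat n n" "i < n" "finite S" "S \<subseteq> {0..<n} - {i}"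
  shows "\<exists>C. elem_reduces n B C \<and> (\<forall>k<n. \<forall>m<n.
           C $$ (k, m) = B $$ (k, m) + (if k = i then (\<Sum>l\<in>S. c l * B $$ (l, m)) else 0))"
  using assms(3,4)
proof (induction S rule: finite_induct)
  case empty
  then show ?case by (intro exI[of _ B]) (auto intro: elem_reduces.refl)
next
  case (insert l S)
  then obtain C where C: "elem_reduces n B C"
    "\<forall>k<n. \<forall>m<n. C $$ (k, m) = B $$ (k, m) +
        (if k = i then (\<Sum>l\<in>S. c l * B $$ (l, m)) else 0)"
    by auto
  have "C \<in> carrier_mat n n" using elem_reduces_carrier[OF C(1) assms(1)] .
  moreover have "l < n" "l \<noteq> i" using insert by auto
  ultimately show ?case
    using C assms insert
    by (intro exI[of _ "transvection n i l (c l) * C"])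
       (auto intro: elem_reduces.row simp: index_transvection_mult algebra_simps)
qed

lemma elem_reduces_add_row_to_rows:
  fixes B :: "'a::ring_1 mat"
  assumes "B \<in> carrier_mat n n" "i < n" "finite S" "S \<subseteq> {0..<n} - {i}"
  shows "\<exists>C. elem_reduces n B C \<and> (\<forall>k<n. \<forall>m<n.
           C $$ (k, m) = B $$ (k, m) + (if k \<in> S then c k * B $$ (i, m) else 0))"
  using assms(3,4)
proof (induction S rule: finite_induct)
  case empty
  then show ?case by (intro exI[of _ B]) (auto intro: elem_reduces.refl)
next
  case (insert l S)
  then obtain C where C: "elem_reduces n B C"
    "\<forall>k<n. \<forall>m<n. C $$ (k, m) = B $$ (k, m) + (if k \<in> S then c k * B $$ (i, m) else 0)"
    by auto
  have "C \<in> carrier_mat n n" using elem_reduces_carrier[OF C(1) assms(1)] .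
  moreover have "l < n" "l \<noteq> i" "i \<notin> S" using insert by auto
  ultimately show ?case
    using C assms insert
    by (intro exI[of _ "transvection n l i (c l) * C"])
       (auto intro: elem_reduces.row simp: index_transvection_mult algebra_simps)
qed

lemma elem_reduces_add_col_to_cols:
  fixes B :: "'a::ring_1 mat"
  assumes "B \<in> carrier_mat n n" "j < n" "finite S" "S \<subseteq> {0..<n} - {j}"
  shows "\<exists>C. elem_reduces n B C \<and> (\<forall>k<n. \<forall>m<n.
           C $$ (k, m) = B $$ (k, m) + (if m \<in> S then B $$ (k, j) * c m else 0))"
  using assms(3,4)
proof (induction S rule: finite_induct)
  case empty
  then show ?case by (intro exI[of _ B]) (auto intro: elem_reduces.refl)
next
  case (insert l S)
  then obtain C where C: "elem_reduces n B C"
    "\<forall>k<n. \<forall>m<n. C $$ (k, m) = B $$ (k, m) + (if m \<in> S then B $$ (k, j) * c m else 0)"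
    by auto
  have "C \<in> carrier_mat n n" using elem_reduces_carrier[OF C(1) assms(1)] .
  moreover have "l < n" "l \<noteq> j" "j \<notin> S" using insert by auto
  ultimately show ?case
    using C assms insert
    by (intro exI[of _ "C * transvection n j l (c l)"])
       (auto intro: elem_reduces.col simp: index_mult_transvection algebra_simps)
qed

lemma elem_reduces_move_one_in_col:
  fixes B :: "'a::ring_1 mat"
  assumes "B \<in> carrier_mat n n" "i < n" "j < n" "i' < n" "B $$ (i, j) = 1"
  shows "\<exists>C. elem_reduces n B C \<and> C $$ (i', j) = 1"
proof (cases "i' = i")
  case True
  then show ?thesis using assms by (auto intro: elem_reduces.refl)
next
  case False
  then show ?thesis
    using assms
    by (intro exI[of _ "transvection n i' i (1 - B $$ (i', j)) * B"])
       (auto intro: elem_reduces.refl elem_reduces.row simp: index_transvection_mult)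
qed

lemma elem_reduces_move_one_in_row:
  fixes B :: "'a::ring_1 mat"
  assumes "B \<in> carrier_mat n n" "i < n" "j < n" "j' < n" "B $$ (i, j) = 1"
  shows "\<exists>C. elem_reduces n B C \<and> C $$ (i, j') = 1"
proof (cases "j' = j")
  case True
  then show ?thesis using assms by (auto intro: elem_reduces.refl)
next
  case False
  then show ?thesis
    using assms
    by (intro exI[of _ "B * transvection n j j' (1 - B $$ (i, j'))"])
       (auto intro: elem_reduces.refl elem_reduces.col simp: index_mult_transvection)
qed

definition one_block_form :: "nat \<Rightarrow> 'a::ring_1 mat \<Rightarrow> bool" where
  "one_block_form n B \<longleftrightarrow>
     B $$ (0, 0) = 1 \<and> (\<forall>k. 0 < k \<and> k < n \<longrightarrow> B $$ (0, k) = 0 \<and> B $$ (k, 0) = 0)"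

lemma elem_reduces_clear_pivot:
  fixes B :: "'a::ring_1 mat"
  assumes B: "B \<in> carrier_mat n n" and "0 < n" and pivot: "B $$ (0, 0) = 1"
  shows "\<exists>D. elem_reduces n B D \<and> one_block_form n D"
proof -
  have S: "finite {1..<n}" "{1..<n} \<subseteq> {0..<n} - {0}" by auto
  obtain C where C: "elem_reduces n B C"
    "\<forall>k<n. \<forall>m<n. C $$ (k, m) = B $$ (k, m) +
        (if m \<in> {1..<n} then B $$ (k, 0) * - B $$ (0, m) else 0)"
    using elem_reduces_add_col_to_cols[OF B \<open>0 < n\<close> S, of "\<lambda>m. - B $$ (0, m)"] by blast
  have "C \<in> carrier_mat n n" using elem_reduces_carrier[OF C(1) B] .
  then obtain D where D: "elem_reduces n C D"
    "\<forall>k<n. \<forall>m<n. D $$ (k, m) = C $$ (k, m) +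
        (if k \<in> {1..<n} then - C $$ (k, 0) * C $$ (0, m) else 0)"
    using elem_reduces_add_row_to_rows[OF _ \<open>0 < n\<close> S, of C "\<lambda>k. - C $$ (k, 0)"] by blast
  have "one_block_form n D"
    unfolding one_block_form_def using C(2) D(2) pivot \<open>0 < n\<close> by simp
  then show ?thesis using elem_reduces_trans[OF D(1) C(1)] by blast
qed

lemma elem_reduces_one_block_form_of_one_entry:
  fixes B :: "'a::ring_1 mat"
  assumes B: "B \<in> carrier_mat n n" and "i < n" "j < n" "B $$ (i, j) = 1"
  shows "\<exists>D. elem_reduces n B D \<and> one_block_form n D"
proof -
  have "0 < n" using \<open>i < n\<close> by simp
  obtain C1 where C1: "elem_reduces n B C1" "C1 $$ (0, j) = 1"
    using elem_reduces_move_one_in_col[OF assms(1-3) \<open>0 < n\<close> assms(4)] by blast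
  have C1_carrier: "C1 \<in> carrier_mat n n" using elem_reduces_carrier[OF C1(1) B] .
  obtain C2 where C2: "elem_reduces n C1 C2" "C2 $$ (0, 0) = 1"
    using elem_reduces_move_one_in_row[OF C1_carrier \<open>0 < n\<close> \<open>j < n\<close> \<open>0 < n\<close> C1(2)] by blast
  have "C2 \<in> carrier_mat n n" using elem_reduces_carrier[OF C2(1) C1_carrier] .
  then obtain D where "elem_reduces n C2 D" "one_block_form n D"
    using elem_reduces_clear_pivot[OF _ \<open>0 < n\<close> C2(2)] by blast
  then show ?thesis using elem_reduces_trans C1(1) C2(1) by blast
qed

lemma elem_reduces_isolate_idempotent_entry:
  fixes B :: "'a::ring_1 mat"
  assumes B: "B \<in> carrier_mat n n" and "i < n" "j < n"
    and idem: "B $$ (i, j) * B $$ (i, j) = B $$ (i, j)"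
  shows "\<exists>C. elem_reduces n B C \<and> C $$ (i, j) = B $$ (i, j) \<and>
           (\<forall>k<n. k \<noteq> i \<longrightarrow> C $$ (k, j) * B $$ (i, j) = 0)"
proof -
  obtain C where C: "elem_reduces n B C"
    "\<forall>k<n. \<forall>m<n. C $$ (k, m) = B $$ (k, m) +
        (if k \<in> {0..<n} - {i} then - B $$ (k, j) * B $$ (i, m) else 0)"
    using elem_reduces_add_row_to_rows[OF B \<open>i < n\<close> finite_Diff[OF finite_atLeastLessThan] order_refl,
        of "\<lambda>k. - B $$ (k, j)"]
    by blast
  have "C $$ (k, j) * B $$ (i, j) = 0" if "k < n" "k \<noteq> i" for k
  proof -
    have "C $$ (k, j) * B $$ (i, j) = B $$ (k, j) * B $$ (i, j) - B $$ (k, j) * (B $$ (i, j) * B $$ (i, j))"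
      using C(2) that \<open>j < n\<close> by (simp add: algebra_simps)
    then show ?thesis using idem by simp
  qed
  then show ?thesis using C \<open>i < n\<close> \<open>j < n\<close> by auto
qed

lemma left_inverse_sum_off_idempotent_entry:
  fixes C Y :: "'a::ring_1 mat"
  assumes "C \<in> carrier_mat n n" "Y \<in> carrier_mat n n" "Y * C = 1\<^sub>m n" "i < n" "j < n"
    and idem: "C $$ (i, j) * C $$ (i, j) = C $$ (i, j)"
    and annihilated: "\<forall>k<n. k \<noteq> i \<longrightarrow> C $$ (k, j) * C $$ (i, j) = 0"
  shows "(\<Sum>p\<in>{0..<n} - {i}. Y $$ (j, p) * C $$ (p, j)) = 1 - C $$ (i, j)"
proof -
  define e where "e = C $$ (i, j)"
  define s where "s = (\<Sum>p\<in>{0..<n} - {i}. Y $$ (j, p) * C $$ (p, j))"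
  have "1 = (Y * C) $$ (j, j)" using \<open>Y * C = 1\<^sub>m n\<close> \<open>j < n\<close> by simp
  also have "\<dots> = (\<Sum>p\<in>{0..<n}. Y $$ (j, p) * C $$ (p, j))"
    using assms(1,2,5) by (simp add: scalar_prod_def)
  also have "\<dots> = Y $$ (j, i) * e + s"
    unfolding e_def s_def using \<open>i < n\<close> by (subst sum.remove[of _ i]) auto
  finally have one: "Y $$ (j, i) * e + s = 1" by simp
  have "s * e = (\<Sum>p\<in>{0..<n} - {i}. Y $$ (j, p) * (C $$ (p, j) * e))"
    unfolding s_def by (simp add: sum_distrib_right mult.assoc)
  also have "\<dots> = 0" using annihilated unfolding e_def by simp
  finally have "Y $$ (j, i) * e = e"
    using arg_cong[OF one, of "\<lambda>x. x * e"] idem unfolding e_def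
    by (simp add: distrib_right mult.assoc)
  then show ?thesis using one unfolding s_def e_def by (metis add_diff_cancel_left')
qed

lemma elem_reduces_one_entry_of_idempotent_entry:
  fixes B X :: "'a::ring_1 mat"
  assumes B: "B \<in> carrier_mat n n" and "X \<in> carrier_mat n n" "X * B = 1\<^sub>m n" "i < n" "j < n"
    and idem: "B $$ (i, j) * B $$ (i, j) = B $$ (i, j)"
  shows "\<exists>D. elem_reduces n B D \<and> D $$ (i, j) = 1"
proof -
  obtain C where C: "elem_reduces n B C" "C $$ (i, j) = B $$ (i, j)"
    "\<forall>k<n. k \<noteq> i \<longrightarrow> C $$ (k, j) * C $$ (i, j) = 0"
    using elem_reduces_isolate_idempotent_entry[OF assms(1,4,5) idem] by auto
  have C_carrier: "C \<in> carrier_mat n n" using elem_reduces_carrier[OF C(1) B] .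
  obtain Y where Y: "Y \<in> carrier_mat n n" "Y * C = 1\<^sub>m n"
    using elem_reduces_left_invertible[OF C(1) assms(1-3)] by blast
  have sum: "(\<Sum>p\<in>{0..<n} - {i}. Y $$ (j, p) * C $$ (p, j)) = 1 - C $$ (i, j)"
    using left_inverse_sum_off_idempotent_entry[OF C_carrier Y \<open>i < n\<close> \<open>j < n\<close>] C(2,3) idem
    by simp
  obtain D where D: "elem_reduces n C D"
    "\<forall>k<n. \<forall>m<n. D $$ (k, m) = C $$ (k, m) +
        (if k = i then (\<Sum>l\<in>{0..<n} - {i}. Y $$ (j, l) * C $$ (l, m)) else 0)"
    using elem_reduces_add_rows_to_row[OF C_carrier \<open>i < n\<close> finite_Diff[OF finite_atLeastLessThan]
        order_refl, of "\<lambda>l. Y $$ (j, l)"]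
    by blast
  have "D $$ (i, j) = 1" using D(2) sum \<open>i < n\<close> \<open>j < n\<close> by simp
  then show ?thesis using elem_reduces_trans[OF D(1) C(1)] by blast
qed

theorem lemma2p3:
  fixes A :: "'a::ring_1 mat" and n i j :: nat
  assumes "A \<in> carrier_mat n n"
    and "invertible_mat A"
    and "i < n" and "j < n"
    and "A $$ (i, j) * A $$ (i, j) = A $$ (i, j)"
  shows "\<exists>B. elem_reduces n A B \<and> B $$ (0, 0) = 1 \<and>
           (\<forall>k. 0 < k \<and> k < n \<longrightarrow> B $$ (0, k) = 0 \<and> B $$ (k, 0) = 0)"
proof -
  obtain X where "X \<in> carrier_mat n n" "X * A = 1\<^sub>m n"
    using assms(1,2) unfolding invertible_mat_def inverts_mat_def
    by (metis carrier_matD index_mult_mat(2,3) index_one_mat(2,3) carrier_matI)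
  then obtain C where C: "elem_reduces n A C" "C $$ (i, j) = 1"
    using elem_reduces_one_entry_of_idempotent_entry[OF assms(1) _ _ assms(3-5)] by blast
  moreover have "C \<in> carrier_mat n n" using elem_reduces_carrier[OF C(1) assms(1)] .
  ultimately obtain B where "elem_reduces n C B" "one_block_form n B"
    using elem_reduces_one_block_form_of_one_entry[OF _ assms(3,4)] by blast
  then show ?thesis
    using elem_reduces_trans[OF _ C(1)] unfolding one_block_form_def by blast
qed

end
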